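(* Let $A$ be a finite alphabet with $k=|A|$. For all $u\in A^*$ and $n\in\mathbb{N}$ there exists some $v\in A^*$ with $v\lesssim_n u$ and $|v|\leq f_k(n)$.
   Context: For words $u,v$, $u\sqsubseteq v$ (subword) means $u=a_1\cdots a_\ell$ with letters $a_i$ and $v=v_0a_1v_1\cdots a_\ell v_\ell$ for some words $v_i$. For $n\in\mathbb{N}$, $u\sim_n v$ iff $u$ and $v$ have exactly the same subwords of length at most $n$, and $u\lesssim_n v$ iff $u\sim_n v$ and $u\sqsubseteq v$. The functions $f_k:\mathbb{N}\to\mathbb{N}$ ($k\geq1$) are defined by $f_1(n)=n$ and $f_{k+1}(n)=\max_{0\leq m\leq n}\bigl(m f_k(n+1-m)+m+f_k(n-m)\bigr)$. *)

theory Defs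
  imports Main "HOL-Library.Sublist"
begin

definition sim_n :: "nat \<Rightarrow> 'a list \<Rightarrow> 'a list \<Rightarrow> bool" where
  "sim_n n u v \<longleftrightarrow> {w. subseq w u \<and> length w \<le> n} = {w. subseq w v \<and> length w \<le> n}"

definition lesssim_n :: "nat \<Rightarrow> 'a list \<Rightarrow> 'a list \<Rightarrow> bool" where
  "lesssim_n n u v \<longleftrightarrow> sim_n n u v \<and> subseq u v"

text \<open>f k n for k \<ge> 1; the value at k = 0 is an unused dummy.\<close>
fun f :: "nat \<Rightarrow> nat \<Rightarrow> nat" where
  "f 0 n = 0"
| "f (Suc 0) n = n"
| "f (Suc (Suc k)) n =
     Max ((\<lambda>m. m * f (Suc k) (n + 1 - m) + m + f (Suc k) (n - m)) ` {0..n})"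

end

theory Submission
  imports Defs
begin

(* Cut u into arches u = w1 a1 ... wm am r, where each wi ai is the shortest prefix of the rest
   containing every letter of A (so ai does not occur in wi); take m <= n arches, stopping early
   only when r misses some letter b. With q = n - m, induction on |A| replaces each wi by a word
   that is <~_(q+1) wi over A - {ai}, and r by a word <~_q r over A - {b} (or by [] if m = n). Conversely, every arch contains all letters, so a subword of u
   of length <= m + q can be embedded arch by arch with at most q + 1 letters inside each arch;
   the ~_(q+1)-equivalent replacements still accommodate these pieces. Finally
   |v| <= m f_(k-1)(n+1-m) + m + f_(k-1)(n-m) <= f_k(n). *)

lemma sim_n_sym: "sim_n p u v \<Longrightarrow> sim_n p v u"
  unfolding sim_n_def by simp

lemma sim_n_subseq_iff: "sim_n p u v \<Longrightarrow> length x \<le> p \<Longrightarrow> subseq x u \<longleftrightarrow> subseq x v"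
  unfolding sim_n_def by blast

lemma sim_n_append:
  assumes "sim_n p u u'" and "sim_n p v v'"
  shows "sim_n p (u @ v) (u' @ v')"
proof -
  have transfer: "subseq x (u' @ v')"
    if "sim_n p u u'" "sim_n p v v'" "subseq x (u @ v)" "length x \<le> p"
    for u u' v v' x :: "'a list"
  proof -
    obtain x1 x2 where x: "x = x1 @ x2" "subseq x1 u" "subseq x2 v"
      using subseq_appendE[OF \<open>subseq x (u @ v)\<close>] .
    with that have "subseq x1 u'" "subseq x2 v'"
      by (auto simp: sim_n_subseq_iff)
    then show ?thesis
      unfolding x(1) by (rule list_emb_append_mono)
  qed
  show ?thesis
    using transfer[OF assms] transfer[OF assms[THEN sim_n_sym]] unfolding sim_n_def by blast
qed

lemma lesssim_n_refl: "lesssim_n p u u"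
  unfolding lesssim_n_def sim_n_def by simp

lemma lesssim_n_0_Nil: "lesssim_n 0 [] u"
  unfolding lesssim_n_def sim_n_def by auto

lemma lesssim_n_append:
  "lesssim_n p u u' \<Longrightarrow> lesssim_n p v v' \<Longrightarrow> lesssim_n p (u @ v) (u' @ v')"
  unfolding lesssim_n_def by (simp add: sim_n_append list_emb_append_mono)

lemma subseq_set_subset: "subseq x u \<Longrightarrow> set x \<subseteq> set u"
  by (auto elim: list_emb_set)

lemma subseq_concat: "list_all2 subseq xss yss \<Longrightarrow> subseq (concat xss) (concat yss)"
  by (induction rule: list_all2_induct) (auto intro: list_emb_append_mono)

lemma subseq_concat_if_covering:
  assumes "\<forall>w\<in>set ws. set x \<subseteq> set w" and "length x \<le> length ws"
  shows "subseq x (concat ws)"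
  using assms
proof (induction ws arbitrary: x)
  case (Cons w ws)
  show ?case
  proof (cases x)
    case x: (Cons c x')
    with Cons.prems Cons.IH[of x'] have "subseq [c] w" "subseq x' (concat ws)"
      by (auto simp: subseq_singleton_left)
    then have "subseq ([c] @ x') (w @ concat ws)"
      by (rule list_emb_append_mono)
    then show ?thesis
      using x by simp
  qed simp
qed simp

lemma subseq_append_split_short_head:
  assumes "subseq x (w @ R)" and "x \<noteq> []" and "set x \<subseteq> set w"
    and short_suffixes: "\<And>y. suffix y x \<Longrightarrow> length y \<le> m \<Longrightarrow> subseq y R"
  obtains x1 x2 where "x = x1 @ x2" "x1 \<noteq> []" "subseq x1 w" "subseq x2 R"
    "length x1 = 1 \<or> m \<le> length x2"
proof -
  obtain c x' where x: "x = c # x'"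
    using \<open>x \<noteq> []\<close> by (cases x) auto
  obtain y z where yz: "x = y @ z" "subseq y w" "subseq z R"
    using subseq_appendE[OF assms(1)] .
  consider "y = [] \<or> length x \<le> Suc m" | "y \<noteq> []" "m \<le> length z"
    | "length z < m" "Suc m < length x"
    by linarith
  then show ?thesis
  proof cases
    case 1
    have "subseq x' R"
      using 1
    proof
      assume "y = []"
      then show ?thesis
        using yz x subseq_Cons' by auto
    next
      assume "length x \<le> Suc m"
      then show ?thesis
        using short_suffixes[of x'] x by (simp add: suffix_def)
    qed
    moreover have "subseq [c] w"
      using assms(3) x by (simp add: subseq_singleton_left)
    ultimately show ?thesis
      using that[of "[c]" x'] x by simp
  next
    case 2
    then show ?thesis
      using that yz by blast
  next
    case 3
    define j where "j = length x - m"
    have "take j x = take j y"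
      using 3 yz(1) unfolding j_def by simp
    then have "subseq (take j x) w"
      using yz(2) by (metis take_is_prefix prefix_imp_subseq subseq_order.order_trans)
    moreover have "subseq (drop j x) R"
      using short_suffixes[of "drop j x"] unfolding j_def by (simp add: suffix_drop)
    moreover have "take j x \<noteq> []" "length (drop j x) = m"
      using 3 x unfolding j_def by auto
    ultimately show ?thesis
      using that[of "take j x" "drop j x"] by simp
  qed
qed

(* The head of x placed in the first arch has at most q + 1 letters: otherwise the tail is short
   enough to embed in the remaining arches on its own. *)
lemma subseq_concat_transfer:
  assumes "list_all2 (sim_n (Suc q)) ws' ws" and "sim_n q r' r"
    and "\<forall>w\<in>set ws. set x \<subseteq> set w"
    and "subseq x (concat ws @ r)" and "length x \<le> length ws + q"
  shows "subseq x (concat ws' @ r')"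
  using assms
proof (induction ws' ws arbitrary: x rule: list_all2_induct)
  case Nil
  then show ?case
    by (simp add: sim_n_subseq_iff)
next
  case (Cons w' ws' w ws)
  show ?case
  proof (cases "x = []")
    case False
    have short_suffixes: "subseq y (concat ws @ r)" if "suffix y x" "length y \<le> length ws" for y
    proof -
      have "\<forall>w\<in>set ws. set y \<subseteq> set w"
        using Cons.prems(2) set_mono_suffix[OF \<open>suffix y x\<close>] by auto
      then show ?thesis
        using subseq_concat_if_covering \<open>length y \<le> length ws\<close> subseq_rev_drop_many by blast
    qed
    obtain x1 x2 where x: "x = x1 @ x2" "x1 \<noteq> []" "subseq x1 w"
        "subseq x2 (concat ws @ r)" "length x1 = 1 \<or> length ws \<le> length x2"
      using subseq_append_split_short_head[of x w "concat ws @ r" "length ws"]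
        Cons.prems(2,3) False short_suffixes by auto
    have "subseq x1 w'"
      using x Cons.prems(4) Cons.hyps(1) by (auto simp: sim_n_subseq_iff)
    moreover have "subseq x2 (concat ws' @ r')"
      using Cons.IH[OF Cons.prems(1) _ x(4)] Cons.prems(2,4) x(1,2)
      by (cases x1) auto
    ultimately have "subseq (x1 @ x2) (w' @ concat ws' @ r')"
      by (rule list_emb_append_mono)
    then show ?thesis
      using x(1) by simp
  qed simp
qed

lemma lesssim_n_concat_append:
  assumes "list_all2 (lesssim_n (Suc q)) ws' ws" and "lesssim_n q r' r"
    and "\<forall>w\<in>set ws. set (concat ws @ r) \<subseteq> set w"
  shows "lesssim_n (length ws + q) (concat ws' @ r') (concat ws @ r)"
proof -
  have sims: "list_all2 (sim_n (Suc q)) ws' ws" and subseqs: "list_all2 subseq ws' ws"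
    using assms(1) by (auto elim: list_all2_mono simp: lesssim_n_def)
  have "subseq (concat ws' @ r') (concat ws @ r)"
    using subseq_concat[OF subseqs] assms(2) by (simp add: lesssim_n_def list_emb_append_mono)
  moreover have "subseq x (concat ws' @ r')"
    if "subseq x (concat ws @ r)" "length x \<le> length ws + q" for x
  proof -
    have "\<forall>w\<in>set ws. set x \<subseteq> set w"
      using assms(3) subseq_set_subset[OF that(1)] by blast
    then show ?thesis
      using subseq_concat_transfer[OF sims _ _ that] assms(2) by (simp add: lesssim_n_def)
  qed
  ultimately show ?thesis
    unfolding lesssim_n_def sim_n_def using subseq_order.order_trans by blast
qed

definition arch :: "'a set \<Rightarrow> 'a list \<Rightarrow> bool" where
  "arch A w \<longleftrightarrow> (\<exists>w0 a. w = w0 @ [a] \<and> a \<notin> set w0 \<and> set w = A)"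

lemma shortest_covering_prefix:
  assumes "A \<noteq> {}" and "A \<subseteq> set u"
  shows "\<exists>w a r. u = w @ a # r \<and> a \<notin> set w \<and> A \<subseteq> insert a (set w)"
  using assms(2)
proof (induction u rule: rev_induct)
  case Nil
  with assms(1) show ?case
    by simp
next
  case (snoc c u)
  show ?case
  proof (cases "A \<subseteq> set u")
    case True
    then obtain w a r where "u = w @ a # r" "a \<notin> set w" "A \<subseteq> insert a (set w)"
      using snoc.IH by blast
    then show ?thesis
      by (intro exI[of _ w] exI[of _ a] exI[of _ "r @ [c]"]) simp
  next
    case False
    with snoc.prems have "c \<notin> set u"
      by auto
    with snoc.prems show ?thesis
      by (intro exI[of _ u] exI[of _ c] exI[of _ "[]"]) simp
  qed
qed

lemma arch_factorization:
  assumes "A \<noteq> {}" and "set u \<subseteq> A"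
  shows "\<exists>ws r. u = concat ws @ r \<and> length ws \<le> n \<and> (\<forall>w\<in>set ws. arch A w)
    \<and> (length ws = n \<or> \<not> A \<subseteq> set r)"
  using assms(2)
proof (induction n arbitrary: u)
  case 0
  show ?case
    by (intro exI[of _ "[]"] exI[of _ u]) simp
next
  case (Suc n)
  show ?case
  proof (cases "A \<subseteq> set u")
    case False
    then show ?thesis
      by (intro exI[of _ "[]"] exI[of _ u]) simp
  next
    case True
    then obtain w a r0 where u: "u = w @ a # r0" "a \<notin> set w" "A \<subseteq> insert a (set w)"
      using shortest_covering_prefix[OF assms(1)] by blast
    with Suc.prems have "arch A (w @ [a])"
      unfolding arch_def by (intro exI[of _ w] exI[of _ a]) auto
    moreover obtain ws r where "r0 = concat ws @ r" "length ws \<le> n" "\<forall>w\<in>set ws. arch A w"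
        "length ws = n \<or> \<not> A \<subseteq> set r"
      using Suc.IH[of r0] Suc.prems u(1) by auto
    ultimately show ?thesis
      using u(1) by (intro exI[of _ "(w @ [a]) # ws"] exI[of _ r]) auto
  qed
qed

lemma f_Suc_ge:
  assumes "m \<le> n"
  shows "m * f k (n + 1 - m) + m + f k (n - m) \<le> f (Suc k) n"
proof (cases k)
  case 0
  with assms show ?thesis
    by simp
next
  case (Suc k')
  with assms have "m * f k (n + 1 - m) + m + f k (n - m) \<in>
      (\<lambda>m. m * f (Suc k') (n + 1 - m) + m + f (Suc k') (n - m)) ` {0..n}"
    by auto
  then show ?thesis
    unfolding Suc f.simps(3) by (rule Max_ge[rotated]) simp
qed

lemma arch_shortening:
  assumes "arch A w"
    and shorten: "\<And>a w0. a \<in> A \<Longrightarrow> set w0 \<subseteq> A - {a} \<Longrightarrow>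
      \<exists>w0'. set w0' \<subseteq> A - {a} \<and> lesssim_n p w0' w0 \<and> length w0' \<le> c"
  shows "\<exists>w'. set w' \<subseteq> A \<and> lesssim_n p w' w \<and> length w' \<le> c + 1"
proof -
  obtain w0 a where w: "w = w0 @ [a]" "a \<notin> set w0" "set w = A"
    using assms(1) unfolding arch_def by blast
  then obtain w0' where w0': "set w0' \<subseteq> A - {a}" "lesssim_n p w0' w0" "length w0' \<le> c"
    using shorten[of a w0] by auto
  have "lesssim_n p (w0' @ [a]) w"
    using w(1) lesssim_n_append[OF w0'(2) lesssim_n_refl] by simp
  with w w0' show ?thesis
    by (intro exI[of _ "w0' @ [a]"]) auto
qed

lemma concat_shortening:
  assumes "\<forall>w\<in>set ws. \<exists>w'. set w' \<subseteq> A \<and> lesssim_n p w' w \<and> length w' \<le> c"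
  shows "\<exists>ws'. list_all2 (lesssim_n p) ws' ws \<and> set (concat ws') \<subseteq> A
    \<and> length (concat ws') \<le> length ws * c"
proof -
  obtain h where h: "\<forall>w\<in>set ws. set (h w) \<subseteq> A \<and> lesssim_n p (h w) w \<and> length (h w) \<le> c"
    using bchoice[OF assms] by blast
  have "length (concat (map h ws)) = sum_list (map (length \<circ> h) ws)"
    by (simp add: length_concat)
  also have "\<dots> \<le> sum_list (map (\<lambda>_. c) ws)"
    using h by (intro sum_list_mono) simp
  also have "\<dots> = length ws * c"
    by (simp add: sum_list_triv)
  finally show ?thesis
    using h by (intro exI[of _ "map h ws"]) (auto simp: list.rel_map list_all2_same)
qed

lemma lesssim_n_shortening_step:
  fixes g :: "nat \<Rightarrow> nat"
  assumes "A \<noteq> {}" and "set u \<subseteq> A"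
    and shorten: "\<And>a w p. a \<in> A \<Longrightarrow> set w \<subseteq> A - {a} \<Longrightarrow>
      \<exists>w'. set w' \<subseteq> A - {a} \<and> lesssim_n p w' w \<and> length w' \<le> g p"
  shows "\<exists>v m. m \<le> n \<and> set v \<subseteq> A \<and> lesssim_n n v u \<and>
    length v \<le> m * g (n + 1 - m) + m + g (n - m)"
proof -
  obtain ws r where u: "u = concat ws @ r" and "length ws \<le> n"
      and arches: "\<forall>w\<in>set ws. arch A w" and full: "length ws = n \<or> \<not> A \<subseteq> set r"
    using arch_factorization[OF assms(1,2)] by blast
  define m q where "m = length ws" and "q = n - m"
  have "m \<le> n" "n + 1 - m = Suc q" "length ws + q = n"
    using \<open>length ws \<le> n\<close> unfolding m_def q_def by auto
  obtain ws' where ws': "list_all2 (lesssim_n (Suc q)) ws' ws" "set (concat ws') \<subseteq> A"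
      "length (concat ws') \<le> m * (g (Suc q) + 1)"
    using concat_shortening arch_shortening[OF _ shorten] arches unfolding m_def by meson
  obtain r' where r': "set r' \<subseteq> A" "lesssim_n q r' r" "length r' \<le> g q"
  proof (cases "m = n")
    case True
    then show ?thesis
      using that[of "[]"] unfolding q_def by (simp add: lesssim_n_0_Nil)
  next
    case False
    with full obtain b where "b \<in> A" "b \<notin> set r"
      unfolding m_def by auto
    moreover have "set r \<subseteq> A"
      using assms(2) u by auto
    ultimately show ?thesis
      using shorten[of b r q] that by auto
  qed
  have "\<forall>w\<in>set ws. set w = A"
    using arches unfolding arch_def by blast
  then have "lesssim_n n (concat ws' @ r') u"
    using lesssim_n_concat_append[OF ws'(1) r'(2)] assms(2) u \<open>length ws + q = n\<close> by simp
  moreover have "length (concat ws' @ r') \<le> m * g (n + 1 - m) + m + g (n - m)"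
    using ws'(3) r'(3) \<open>n + 1 - m = Suc q\<close> unfolding q_def by (simp add: algebra_simps)
  ultimately show ?thesis
    using ws'(2) r'(1) \<open>m \<le> n\<close> by (intro exI[of _ "concat ws' @ r'"] exI[of _ m]) simp
qed

lemma lesssim_n_shortening:
  assumes "finite A" and "card A = k" and "set u \<subseteq> A"
  shows "\<exists>v. set v \<subseteq> A \<and> lesssim_n n v u \<and> length v \<le> f k n"
  using assms
proof (induction k arbitrary: A n u)
  case 0
  then have "u = []"
    by auto
  then show ?case
    using lesssim_n_refl by auto
next
  case (Suc k)
  have "A \<noteq> {}"
    using Suc.prems(2) by auto
  moreover have "\<exists>w'. set w' \<subseteq> A - {a} \<and> lesssim_n p w' w \<and> length w' \<le> f k p"
    if "a \<in> A" "set w \<subseteq> A - {a}" for a w p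
    using Suc.IH[of "A - {a}" w p] Suc.prems(1,2) that by simp
  ultimately obtain v m where "m \<le> n" "set v \<subseteq> A" "lesssim_n n v u"
      "length v \<le> m * f k (n + 1 - m) + m + f k (n - m)"
    using lesssim_n_shortening_step[of A u "f k" n] Suc.prems(3) by blast
  then show ?case
    using f_Suc_ge[of m n k] by (auto intro: le_trans)
qed

theorem theorem6:
  fixes A :: "'a set" and k n :: nat and u :: "'a list"
  assumes "finite A" and "A \<noteq> {}" and "k = card A" and "set u \<subseteq> A"
  shows "\<exists>v. set v \<subseteq> A \<and> lesssim_n n v u \<and> length v \<le> f k n"
  using lesssim_n_shortening[OF assms(1) assms(3)[symmetric] assms(4)] .

end
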